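(* Let $V$ be a finite set, $f:2^V\to\mathbb{R}_+$ nonnegative submodular, $t_1,\ldots,t_k\in V$ distinct terminals, and $\mathbf{x}=(x_{i,j})_{i\in[k],j\in V}$ with $x_{i,j}\ge0$, $\sum_{i=1}^k x_{i,j}=1$ for all $j$, and $x_{i,t_i}=1$ for all $i$. For $\theta\in[0,1]$ define $A_i(\theta)=\{j: x_{i,j}>\theta\}$, $U(\theta)=\{j:\max_i x_{i,j}\le\theta\}$ and $B(\theta)=\{j: 1-\max_i x_{i,j}\ge\theta\}$. Consider the rounding which picks $\theta\in(\tfrac12,1]$ uniformly and $i'\in[k]$ uniformly at random (independently), and assigns $A_i(\theta)$ to terminal $i$ for $i\ne i'$ and $A_{i'}(\theta)\cup U(\theta)$ to terminal $i'$. Then the expected cost $\mathbb{E}[\sum_i f(S_i)]$ of the resulting partition $(S_1,\ldots,S_k)$ equals $$\Big(2-\frac{2}{k}\Big)\sum_{i=1}^k\int_{1/2}^1 f(A_i(\theta))\,d\theta+\frac{2}{k}\sum_{i=1}^k\int_0^{1/2} f(A_i(\theta)\cup B(\theta))\,d\theta.$$ *)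

theory Defs
  imports "HOL-Analysis.Analysis"
begin

definition submodular_on :: "'a set \<Rightarrow> ('a set \<Rightarrow> real) \<Rightarrow> bool" where
  "submodular_on V f \<longleftrightarrow>
     (\<forall>A B. A \<subseteq> V \<longrightarrow> B \<subseteq> V \<longrightarrow> f (A \<union> B) + f (A \<inter> B) \<le> f A + f B)"

text \<open>Terminals are indexed by i in {..<k}.  x i j is the fractional assignment.\<close>
definition A_set :: "'a set \<Rightarrow> (nat \<Rightarrow> 'a \<Rightarrow> real) \<Rightarrow> nat \<Rightarrow> real \<Rightarrow> 'a set" where
  "A_set V x i \<theta> = {j \<in> V. x i j > \<theta>}"

definition U_set :: "'a set \<Rightarrow> nat \<Rightarrow> (nat \<Rightarrow> 'a \<Rightarrow> real) \<Rightarrow> real \<Rightarrow> 'a set" where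
  "U_set V k x \<theta> = {j \<in> V. Max ((\<lambda>i. x i j) ` {..<k}) \<le> \<theta>}"

definition B_set :: "'a set \<Rightarrow> nat \<Rightarrow> (nat \<Rightarrow> 'a \<Rightarrow> real) \<Rightarrow> real \<Rightarrow> 'a set" where
  "B_set V k x \<theta> = {j \<in> V. 1 - Max ((\<lambda>i. x i j) ` {..<k}) \<ge> \<theta>}"

definition rounded_part :: "'a set \<Rightarrow> nat \<Rightarrow> (nat \<Rightarrow> 'a \<Rightarrow> real) \<Rightarrow> real \<Rightarrow> nat \<Rightarrow> nat \<Rightarrow> 'a set" where
  "rounded_part V k x \<theta> i' i =
     (if i = i' then A_set V x i \<theta> \<union> U_set V k x \<theta> else A_set V x i \<theta>)"

text \<open>Expected cost of the rounding: \<theta> uniform on (1/2,1] (density 2),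
  i' uniform on {..<k}, independent.\<close>
definition expected_rounding_cost ::
    "'a set \<Rightarrow> nat \<Rightarrow> ('a set \<Rightarrow> real) \<Rightarrow> (nat \<Rightarrow> 'a \<Rightarrow> real) \<Rightarrow> real" where
  "expected_rounding_cost V k f x =
     (\<Sum>i'<k. (1 / real k) *
        (LINT \<theta>:{1/2<..1}|lborel. 2 * (\<Sum>i<k. f (rounded_part V k x \<theta> i' i))))"

end

theory Submission
  imports Defs
begin

text \<open>For \<open>\<theta> \<ge> 1/2\<close> one has \<open>A\<^sub>i(\<theta>) \<union> U(\<theta>) = A\<^sub>i(1 - \<theta>) \<union> B(1 - \<theta>)\<close>: indeed
  \<open>U(\<theta>) = B(1 - \<theta>)\<close>, and a point with \<open>x\<^sub>i\<^sub>j > 1 - \<theta>\<close> but \<open>max\<^sub>l x\<^sub>l\<^sub>j > \<theta>\<close> must attain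
  the maximum at \<open>i\<close>, since two coordinates summing to at most 1 cannot both exceed
  \<open>1 - \<theta>\<close> and \<open>\<theta>\<close>.  Hence the substitution \<open>\<theta> \<mapsto> 1 - \<theta>\<close> turns the integral over
  \<open>(1/2, 1]\<close> of \<open>f(A\<^sub>i \<union> U)\<close> into the integral over \<open>[0, 1/2]\<close> of \<open>f(A\<^sub>i \<union> B)\<close>.  Averaging
  over the uniformly chosen index \<open>i'\<close>, each \<open>A\<^sub>i\<close> is kept alone with probability
  \<open>1 - 1/k\<close> and enlarged by \<open>U\<close> with probability \<open>1/k\<close>, and the density of \<open>\<theta>\<close> is 2;
  this gives the formula.\<close>

lemma measurable_Collect_finite:
  assumes "finite V" "\<And>j. j \<in> V \<Longrightarrow> Measurable.pred M (Q j)"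
  shows "(\<lambda>\<theta>. {j\<in>V. Q j \<theta>}) \<in> M \<rightarrow>\<^sub>M count_space UNIV"
  using assms
proof (induction V rule: finite_induct)
  case empty
  show ?case by simp
next
  case (insert a F)
  have split: "(\<lambda>\<theta>. {j\<in>insert a F. Q j \<theta>}) =
      (\<lambda>\<theta>. if Q a \<theta> then insert a {j\<in>F. Q j \<theta>} else {j\<in>F. Q j \<theta>})"
    by (rule ext) auto
  have F: "(\<lambda>\<theta>. {j\<in>F. Q j \<theta>}) \<in> M \<rightarrow>\<^sub>M count_space UNIV"
    using insert by auto
  have "(\<lambda>\<theta>. insert a {j\<in>F. Q j \<theta>}) \<in> M \<rightarrow>\<^sub>M count_space UNIV"
    using measurable_compose[OF F, where g = "insert a"] by simp
  moreover have "{\<theta>\<in>space M. Q a \<theta>} \<in> sets M"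
    using insert.prems by measurable
  ultimately show ?case
    unfolding split by (rule measurable_If[OF _ F])
qed

lemma set_integrable_setfun_Collect:
  fixes f :: "'a set \<Rightarrow> real"
  assumes "finite V" "\<And>j. j \<in> V \<Longrightarrow> Measurable.pred M (Q j)"
    and "S \<in> sets M" "emeasure M S < \<infinity>"
  shows "set_integrable M S (\<lambda>\<theta>. f {j\<in>V. Q j \<theta>})"
proof -
  have bound: "\<bar>f {j\<in>V. Q j \<theta>}\<bar> \<le> (\<Sum>T\<in>Pow V. \<bar>f T\<bar>)" for \<theta>
    using assms(1) by (intro member_le_sum) auto
  have "(\<lambda>\<theta>. f {j\<in>V. Q j \<theta>}) \<in> borel_measurable M"
    using measurable_compose[OF measurable_Collect_finite[OF assms(1,2)], where g = f] by simp
  then show ?thesis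
    unfolding set_integrable_def
    using assms(3,4) bound
    by (intro integrableI_bounded_set[where A = S and B = "\<Sum>T\<in>Pow V. \<bar>f T\<bar>"])
       (auto simp: indicator_def)
qed

lemma set_integral_sum:
  fixes g :: "'i \<Rightarrow> 'b \<Rightarrow> real"
  assumes "\<And>i. i \<in> I \<Longrightarrow> set_integrable M A (g i)"
  shows "(LINT x:A|M. (\<Sum>i\<in>I. g i x)) = (\<Sum>i\<in>I. LINT x:A|M. g i x)"
  using assms
  by (simp add: set_integrable_def set_lebesgue_integral_def sum_distrib_left integral_sum)

lemma set_integrable_sum:
  fixes g :: "'i \<Rightarrow> 'b \<Rightarrow> real"
  assumes "\<And>i. i \<in> I \<Longrightarrow> set_integrable M A (g i)"
  shows "set_integrable M A (\<lambda>x. \<Sum>i\<in>I. g i x)"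
  using assms
  by (simp add: set_integrable_def sum_distrib_left integrable_sum)

lemma set_integral_reflect_Ioc:
  fixes H :: "real \<Rightarrow> 'b::{banach, second_countable_topology}"
  shows "(LBINT \<theta>:{a<..b}. H (c - \<theta>)) = (LBINT \<theta>:{c - b..c - a}. H \<theta>)"
proof -
  have "(LBINT \<theta>:{c - b..c - a}. H \<theta>)
      = \<bar>-1\<bar> *\<^sub>R (LBINT \<theta>. indicator {c - b..c - a} (c + -1 * \<theta>) *\<^sub>R H (c + -1 * \<theta>))"
    unfolding set_lebesgue_integral_def by (rule lborel_integral_real_affine) simp
  also have "\<dots> = (LBINT \<theta>:{a..b}. H (c - \<theta>))"
    unfolding set_lebesgue_integral_def
    by (auto intro!: Bochner_Integration.integral_cong split: split_indicator)
  also have "\<dots> = (LBINT \<theta>:{a<..b}. H (c - \<theta>))"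
    by (rule set_integral_discrete_difference[where X = "{a}"]) auto
  finally show ?thesis ..
qed

lemma sum_rounded_part:
  fixes f :: "'a set \<Rightarrow> real"
  assumes "i' < k"
  shows "(\<Sum>i<k. f (rounded_part V k x \<theta> i' i)) =
           (\<Sum>i<k. f (A_set V x i \<theta>)) - f (A_set V x i' \<theta>)
         + f (A_set V x i' \<theta> \<union> U_set V k x \<theta>)"
proof -
  have "(\<Sum>i<k. f (rounded_part V k x \<theta> i' i)) =
      (\<Sum>i<k. f (A_set V x i \<theta>)
             + (if i = i' then f (A_set V x i' \<theta> \<union> U_set V k x \<theta>) - f (A_set V x i' \<theta>) else 0))"
    by (rule sum.cong) (auto simp: rounded_part_def)
  with assms show ?thesis
    by (simp add: sum.distrib)
qed

lemma expected_rounding_cost_eq: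
  fixes f :: "'a set \<Rightarrow> real"
  assumes "finite V"
  shows "expected_rounding_cost V k f x =
           (2 - 2 / real k) * (\<Sum>i<k. LINT \<theta>:{1/2<..1}|lborel. f (A_set V x i \<theta>))
         + (2 / real k) * (\<Sum>i<k. LINT \<theta>:{1/2<..1}|lborel. f (A_set V x i \<theta> \<union> U_set V k x \<theta>))"
proof -
  define I where "I i = (LINT \<theta>:{1/2<..1}|lborel. f (A_set V x i \<theta>))" for i
  define J where "J i = (LINT \<theta>:{1/2<..1}|lborel. f (A_set V x i \<theta> \<union> U_set V k x \<theta>))" for i
  have finite_Ioc: "emeasure lborel {1/2<..1::real} < \<infinity>"
    by (simp add: less_top[symmetric])
  have int_A: "set_integrable lborel {1/2<..1} (\<lambda>\<theta>. f (A_set V x i \<theta>))" for i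
    unfolding A_set_def
    by (rule set_integrable_setfun_Collect[OF assms _ _ finite_Ioc]) auto
  have "A_set V x i \<theta> \<union> U_set V k x \<theta> =
      {j\<in>V. \<theta> < x i j \<or> Max ((\<lambda>i. x i j) ` {..<k}) \<le> \<theta>}" for i \<theta>
    unfolding A_set_def U_set_def by auto
  then have int_AU: "set_integrable lborel {1/2<..1} (\<lambda>\<theta>. f (A_set V x i \<theta> \<union> U_set V k x \<theta>))" for i
    by (simp only:) (rule set_integrable_setfun_Collect[OF assms _ _ finite_Ioc], auto)
  have cost: "(LINT \<theta>:{1/2<..1}|lborel. 2 * (\<Sum>i<k. f (rounded_part V k x \<theta> i' i))) =
      2 * ((\<Sum>i<k. I i) - I i' + J i')" if "i' < k" for i'
  proof -
    have "(LINT \<theta>:{1/2<..1}|lborel. 2 * (\<Sum>i<k. f (rounded_part V k x \<theta> i' i))) =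
      2 * (LINT \<theta>:{1/2<..1}|lborel. (\<Sum>i<k. f (A_set V x i \<theta>)) - f (A_set V x i' \<theta>)
                                      + f (A_set V x i' \<theta> \<union> U_set V k x \<theta>))"
      by (simp only: sum_rounded_part[OF that]) (rule set_integral_mult_right)
    also have "\<dots> = 2 * ((\<Sum>i<k. I i) - I i' + J i')"
      using int_A int_AU
      by (simp add: I_def J_def set_integral_add set_integral_diff set_integral_sum
                    set_integrable_sum)
    finally show ?thesis .
  qed
  show ?thesis
  proof (cases "k = 0")
    case True
    then show ?thesis by (simp add: expected_rounding_cost_def)
  next
    case False
    have "expected_rounding_cost V k f x = (\<Sum>i'<k. (1 / real k) * (2 * ((\<Sum>i<k. I i) - I i' + J i')))"
      unfolding expected_rounding_cost_def by (rule sum.cong) (simp_all only: lessThan_iff cost)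
    also have "\<dots> = (2 / real k) * (real k * (\<Sum>i<k. I i))
                     - (2 / real k) * (\<Sum>i<k. I i) + (2 / real k) * (\<Sum>i<k. J i)"
      by (simp add: sum_distrib_left sum_subtractf sum.distrib sum_divide_distrib algebra_simps)
    also have "\<dots> = (2 - 2 / real k) * (\<Sum>i<k. I i) + (2 / real k) * (\<Sum>i<k. J i)"
      using False by (simp add: algebra_simps)
    finally show ?thesis
      by (simp add: I_def J_def)
  qed
qed

lemma A_set_Un_U_set_eq_reflect:
  fixes x :: "nat \<Rightarrow> 'a \<Rightarrow> real"
  assumes "i < k" "1/2 \<le> \<theta>"
    and nonneg: "\<And>i j. i < k \<Longrightarrow> j \<in> V \<Longrightarrow> x i j \<ge> 0"
    and sum_one: "\<And>j. j \<in> V \<Longrightarrow> (\<Sum>i<k. x i j) = 1"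
  shows "A_set V x i \<theta> \<union> U_set V k x \<theta> = A_set V x i (1 - \<theta>) \<union> B_set V k x (1 - \<theta>)"
proof -
  define Mx where "Mx j = Max ((\<lambda>i. x i j) ` {..<k})" for j
  have "\<theta> < x i j" if j: "j \<in> V" "1 - \<theta> < x i j" "\<theta> < Mx j" for j
  proof -
    have "Mx j \<in> (\<lambda>i. x i j) ` {..<k}"
      unfolding Mx_def using \<open>i < k\<close> by (intro Max_in) auto
    then obtain i' where i': "i' < k" "x i' j = Mx j" by auto
    show ?thesis
    proof (cases "i' = i")
      case True
      then show ?thesis using i' j by simp
    next
      case False
      have "(\<Sum>l\<in>{i, i'}. x l j) \<le> (\<Sum>l<k. x l j)"
        using \<open>i < k\<close> i' nonneg j by (intro sum_mono2) auto
      with False sum_one[OF \<open>j \<in> V\<close>] have "x i j + x i' j \<le> 1" by simp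
      with j i' show ?thesis by linarith
    qed
  qed
  moreover have "B_set V k x (1 - \<theta>) = U_set V k x \<theta>"
    unfolding B_set_def U_set_def by auto
  moreover have "A_set V x i \<theta> \<subseteq> A_set V x i (1 - \<theta>)"
    using \<open>1/2 \<le> \<theta>\<close> unfolding A_set_def by auto
  ultimately show ?thesis
    unfolding A_set_def U_set_def Mx_def by force
qed

theorem lemma2:
  fixes V :: "'a set" and f :: "'a set \<Rightarrow> real" and k :: nat
    and t :: "nat \<Rightarrow> 'a" and x :: "nat \<Rightarrow> 'a \<Rightarrow> real"
  assumes "finite V"
    and "\<And>S. S \<subseteq> V \<Longrightarrow> f S \<ge> 0"
    and "submodular_on V f"
    and "t ` {..<k} \<subseteq> V" and "inj_on t {..<k}"
    and "\<And>i j. i < k \<Longrightarrow> j \<in> V \<Longrightarrow> x i j \<ge> 0"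
    and "\<And>j. j \<in> V \<Longrightarrow> (\<Sum>i<k. x i j) = 1"
    and "\<And>i. i < k \<Longrightarrow> x i (t i) = 1"
  shows "expected_rounding_cost V k f x =
           (2 - 2 / real k) * (\<Sum>i<k. LINT \<theta>:{1/2<..1}|lborel. f (A_set V x i \<theta>))
         + (2 / real k) * (\<Sum>i<k. LINT \<theta>:{0..1/2}|lborel. f (A_set V x i \<theta> \<union> B_set V k x \<theta>))"
proof -
  have "(LINT \<theta>:{1/2<..1}|lborel. f (A_set V x i \<theta> \<union> U_set V k x \<theta>))
      = (LINT \<theta>:{0..1/2}|lborel. f (A_set V x i \<theta> \<union> B_set V k x \<theta>))" if "i < k" for i
  proof -
    have "(LINT \<theta>:{1/2<..1}|lborel. f (A_set V x i \<theta> \<union> U_set V k x \<theta>))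
        = (LINT \<theta>:{1/2<..1}|lborel. f (A_set V x i (1 - \<theta>) \<union> B_set V k x (1 - \<theta>)))"
      using A_set_Un_U_set_eq_reflect[where V = V and x = x, OF that _ assms(6,7)]
      by (intro set_lebesgue_integral_cong) auto
    also have "\<dots> = (LINT \<theta>:{0..1/2}|lborel. f (A_set V x i \<theta> \<union> B_set V k x \<theta>))"
      using set_integral_reflect_Ioc[where c = 1 and a = "1/2" and b = 1] by simp
    finally show ?thesis .
  qed
  then have "(\<Sum>i<k. LINT \<theta>:{1/2<..1}|lborel. f (A_set V x i \<theta> \<union> U_set V k x \<theta>))
      = (\<Sum>i<k. LINT \<theta>:{0..1/2}|lborel. f (A_set V x i \<theta> \<union> B_set V k x \<theta>))"
    by (intro sum.cong) auto
  with expected_rounding_cost_eq[OF assms(1)] show ?thesis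
    by simp
qed

end
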